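(* Let $E$ be a real Banach space and let $T:E\to E$ be a linear operator preserving (Birkhoff–James) orthogonality, i.e. for all $x,y\in E$, $x\perp y$ implies $Tx\perp Ty$. Then there exist a constant $k\in\mathbb{R}$ and a linear isometry $U:E\to E$ (i.e. $\|Ux\|=\|x\|$ for all $x\in E$) such that $T=kU$. Equivalently, there is a constant $c\ge 0$ with $\|Tx\|=c\|x\|$ for all $x\in E$.
   Context: For $x,y$ in a real normed space $E$, $x$ is said to be orthogonal to $y$, written $x\perp y$, if $\|x+\alpha y\|\ge\|x\|$ for every $\alpha\in\mathbb{R}$. *)

theory Defs
  imports "HOL-Analysis.Analysis"
begin

definition bj_orth :: "'a::real_normed_vector \<Rightarrow> 'a \<Rightarrow> bool" where
  "bj_orth x y \<longleftrightarrow> (\<forall>\<alpha>::real. norm (x + \<alpha> *\<^sub>R y) \<ge> norm x)"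

end

theory Submission
  imports Defs
begin

(* Fix a line q \<mapsto> y + q x missing 0, and let phi q = norm (y + q x) and
   psi q = norm (T (y + q x)). If B is a subgradient of the convex function phi at a, then
   u = y + a x is orthogonal to B u - phi a x, the direction in which the supporting line of phi
   at a is flat. Applying T, the multiple (psi a / phi a) of that supporting line stays below psi.
   On a fine partition of [s, t] the gaps between phi and these supporting lines telescope through
   the monotone subgradients, so psi / phi is nondecreasing along the line, hence constant by
   symmetry. Independent x and y lie on lines through y and through x that meet in x + y, so
   norm (T z) / norm z does not depend on z \<noteq> 0. *)

lemma convex_on_real_subgradient:
  fixes f :: "real \<Rightarrow> real"
  assumes "convex_on UNIV f"
  obtains B where "\<And>q. f s + B * (q - s) \<le> f q"
proof -
  define S where "S = (\<lambda>h. (f (s + h) - f s) / h) ` {0<..}"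
  have slope_le: "(f s - f (s - k)) / k \<le> z" if "k > 0" "z \<in> S" for k z
  proof -
    from that obtain h where h: "h > 0" "z = (f (s + h) - f s) / h" unfolding S_def by auto
    have "s - k < s" "s < s + h" using h(1) \<open>k > 0\<close> by auto
    have "(f s - f (s - k)) / k = (f (s - k) - f s) / (s - k - s)"
      using \<open>k > 0\<close> by (simp add: field_simps)
    also from convex_on_slope_le[OF assms UNIV_I UNIV_I \<open>s - k < s\<close> \<open>s < s + h\<close>]
    have "\<dots> \<le> (f s - f (s + h)) / (s - (s + h))"
      by (rule order.trans)
    also have "\<dots> = z" using h by (simp add: field_simps)
    finally show ?thesis .
  qed
  have "S \<noteq> {}" unfolding S_def by auto
  have "bdd_below S"
    by (rule bdd_belowI[where m = "f s - f (s - 1)"]) (use slope_le[of 1] in auto)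
  have "f s + Inf S * (q - s) \<le> f q" for q
  proof (cases q s rule: linorder_cases)
    case greater
    have "(f q - f s) / (q - s) \<in> S"
      unfolding S_def using greater by (intro image_eqI[where x = "q - s"]) auto
    then have "Inf S \<le> (f q - f s) / (q - s)" using cInf_lower[OF _ \<open>bdd_below S\<close>] by auto
    then show ?thesis using greater by (simp add: field_simps)
  next
    case less
    have "(f s - f (s - (s - q))) / (s - q) \<le> Inf S"
      using less by (intro cInf_greatest[OF \<open>S \<noteq> {}\<close>] slope_le) auto
    then show ?thesis using less by (simp add: field_simps)
  qed simp
  then show ?thesis by (rule that)
qed

lemma mult_one_minus_chain_lower_bound:
  fixes x a :: "nat \<Rightarrow> real"
  assumes a_nonneg: "\<And>i. 0 \<le> a i" and x_nonneg: "\<And>i. 0 \<le> x i"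
    and step: "\<And>i. x i * (1 - a i) \<le> x (Suc i)"
  shows "x 0 * (1 - (\<Sum>i<n. a i)) \<le> x n"
proof (induction n)
  case (Suc n)
  define A where "A = (\<Sum>i<n. a i)"
  have "0 \<le> A" unfolding A_def by (simp add: a_nonneg sum_nonneg)
  show ?case
  proof (cases "a n \<le> 1")
    case True
    have "x 0 * (1 - (A + a n)) \<le> x 0 * (1 - A) * (1 - a n)"
      using \<open>0 \<le> A\<close> a_nonneg[of n] x_nonneg[of 0] by (simp add: algebra_simps)
    also have "\<dots> \<le> x n * (1 - a n)"
      using Suc.IH True unfolding A_def by (intro mult_right_mono) auto
    also have "\<dots> \<le> x (Suc n)" by (rule step)
    finally show ?thesis unfolding A_def by simp
  next
    case False
    then have "x 0 * (1 - (A + a n)) \<le> 0"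
      using \<open>0 \<le> A\<close> x_nonneg[of 0] by (simp add: mult_nonneg_nonpos)
    then show ?thesis using x_nonneg[of "Suc n"] unfolding A_def by simp
  qed
qed simp

lemma support_gap_sum_le:
  fixes \<phi> B :: "real \<Rightarrow> real" and \<tau> :: "nat \<Rightarrow> real"
  assumes support: "\<And>a q. \<phi> a + B a * (q - a) \<le> \<phi> q"
    and step: "\<And>i. \<tau> (Suc i) - \<tau> i = h"
  shows "(\<Sum>i<n. \<phi> (\<tau> (Suc i)) - (\<phi> (\<tau> i) + B (\<tau> i) * h)) \<le> h * (B (\<tau> n) - B (\<tau> 0))"
proof -
  have "(\<Sum>i<n. \<phi> (\<tau> (Suc i)) - (\<phi> (\<tau> i) + B (\<tau> i) * h)) \<le> (\<Sum>i<n. h * B (\<tau> (Suc i)) - h * B (\<tau> i))"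
  proof (rule sum_mono)
    fix i
    have "\<phi> (\<tau> (Suc i)) + B (\<tau> (Suc i)) * (\<tau> i - \<tau> (Suc i)) \<le> \<phi> (\<tau> i)" by (rule support)
    then show "\<phi> (\<tau> (Suc i)) - (\<phi> (\<tau> i) + B (\<tau> i) * h) \<le> h * B (\<tau> (Suc i)) - h * B (\<tau> i)"
      using step[of i] by (simp add: algebra_simps)
  qed
  also have "\<dots> = h * (B (\<tau> n) - B (\<tau> 0))"
    using sum_lessThan_telescope[of "\<lambda>i. h * B (\<tau> i)" n] by (simp add: algebra_simps)
  finally show ?thesis .
qed

lemma ratio_partition_lower_bound:
  fixes \<phi> \<psi> B :: "real \<Rightarrow> real"
  assumes \<phi>_pos: "\<And>q. 0 < \<phi> q" and \<psi>_nonneg: "\<And>q. 0 \<le> \<psi> q"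
    and support: "\<And>a q. \<phi> a + B a * (q - a) \<le> \<phi> q"
    and \<psi>_bound: "\<And>a q. \<psi> a * (\<phi> a + B a * (q - a)) \<le> \<psi> q * \<phi> a"
    and "s \<le> t" and "0 < m" and m_le: "\<And>q. q \<in> {s..t} \<Longrightarrow> m \<le> \<phi> q" and "0 < n"
  shows "\<psi> s / \<phi> s * (1 - (t - s) * (B t - B s) / m / real n) \<le> \<psi> t / \<phi> t"
proof -
  define r where "r q = \<psi> q / \<phi> q" for q
  define D where "D a b = \<phi> b - (\<phi> a + B a * (b - a))" for a b
  have r_nonneg: "0 \<le> r q" for q unfolding r_def using \<phi>_pos[of q] \<psi>_nonneg[of q] by simp
  have D_nonneg: "0 \<le> D a b" for a b unfolding D_def using support[of a b] by simp
  have r_step: "r a * (1 - D a b / \<phi> b) \<le> r b" for a b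
  proof -
    have "\<psi> a * (\<phi> b - D a b) \<le> \<psi> b * \<phi> a" using \<psi>_bound[of a b] unfolding D_def by simp
    then have "\<psi> a * (\<phi> b - D a b) / (\<phi> a * \<phi> b) \<le> \<psi> b * \<phi> a / (\<phi> a * \<phi> b)"
      using \<phi>_pos[of a] \<phi>_pos[of b] by (intro divide_right_mono) auto
    then show ?thesis using \<phi>_pos[of a] \<phi>_pos[of b] unfolding r_def by (simp add: field_simps)
  qed
  define h where "h = (t - s) / real n"
  define \<tau> where "\<tau> i = s + real i * h" for i
  define c where "c i = D (\<tau> i) (\<tau> (Suc i)) / \<phi> (\<tau> (Suc i))" for i
  have "\<tau> 0 = s" "\<tau> n = t" unfolding \<tau>_def h_def using \<open>0 < n\<close> by auto
  have \<tau>_step: "\<tau> (Suc i) - \<tau> i = h" for i unfolding \<tau>_def by (simp add: algebra_simps)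
  have \<tau>_in: "\<tau> i \<in> {s..t}" if "i \<le> n" for i
  proof -
    have "0 \<le> h" unfolding h_def using \<open>s \<le> t\<close> by simp
    then have "real i * h \<le> real n * h" using that by (intro mult_right_mono) auto
    moreover have "real n * h = t - s" unfolding h_def using \<open>0 < n\<close> by simp
    ultimately show ?thesis unfolding \<tau>_def using \<open>0 \<le> h\<close> by auto
  qed
  have "r (\<tau> 0) * (1 - (\<Sum>i<n. c i)) \<le> r (\<tau> n)"
    by (rule mult_one_minus_chain_lower_bound)
      (use D_nonneg \<phi>_pos r_nonneg r_step in \<open>auto simp: c_def less_imp_le\<close>)
  then have chain: "r s * (1 - (\<Sum>i<n. c i)) \<le> r t"
    using \<open>\<tau> 0 = s\<close> \<open>\<tau> n = t\<close> by simp
  have "(\<Sum>i<n. c i) \<le> (\<Sum>i<n. D (\<tau> i) (\<tau> (Suc i))) / m"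
    unfolding sum_divide_distrib c_def
    using m_le \<tau>_in \<open>0 < m\<close> D_nonneg \<phi>_pos by (intro sum_mono divide_left_mono) auto
  also have "(\<Sum>i<n. D (\<tau> i) (\<tau> (Suc i))) \<le> h * (B t - B s)"
    using support_gap_sum_le[where \<phi> = \<phi> and B = B and \<tau> = \<tau>, OF support \<tau>_step, of n] \<open>\<tau> 0 = s\<close> \<open>\<tau> n = t\<close>
    unfolding D_def \<tau>_step by simp
  finally have "r s * (1 - (t - s) * (B t - B s) / m / real n) \<le> r s * (1 - (\<Sum>i<n. c i))"
    using r_nonneg \<open>0 < m\<close> by (intro mult_left_mono) (auto simp: h_def divide_right_mono mult.commute)
  with chain show ?thesis unfolding r_def by simp
qed

lemma ratio_mono_if_support_bound:
  fixes \<phi> \<psi> B :: "real \<Rightarrow> real"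
  assumes \<phi>_pos: "\<And>q. 0 < \<phi> q" and "continuous_on {s..t} \<phi>" and \<psi>_nonneg: "\<And>q. 0 \<le> \<psi> q"
    and support: "\<And>a q. \<phi> a + B a * (q - a) \<le> \<phi> q"
    and \<psi>_bound: "\<And>a q. \<psi> a * (\<phi> a + B a * (q - a)) \<le> \<psi> q * \<phi> a"
    and "s \<le> t"
  shows "\<psi> s / \<phi> s \<le> \<psi> t / \<phi> t"
proof -
  obtain p where "p \<in> {s..t}" and p_min: "\<And>q. q \<in> {s..t} \<Longrightarrow> \<phi> p \<le> \<phi> q"
    using continuous_attains_inf[OF compact_Icc _ \<open>continuous_on {s..t} \<phi>\<close>] \<open>s \<le> t\<close> by auto
  define C where "C = (t - s) * (B t - B s) / \<phi> p"
  have "(\<lambda>n. \<psi> s / \<phi> s * (1 - C / real n)) \<longlonglongrightarrow> \<psi> s / \<phi> s * (1 - 0)"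
    by (intro tendsto_intros)
  moreover have "\<psi> s / \<phi> s * (1 - C / real n) \<le> \<psi> t / \<phi> t" if "n \<ge> 1" for n
    unfolding C_def using that
    by (intro ratio_partition_lower_bound[OF \<phi>_pos \<psi>_nonneg support \<psi>_bound \<open>s \<le> t\<close> \<phi>_pos p_min])
      auto
  ultimately show ?thesis by (intro LIMSEQ_le_const2) auto
qed

lemma convex_on_norm_line: "convex_on UNIV (\<lambda>q::real. norm (y + q *\<^sub>R x))"
proof (rule convex_onI)
  fix t a b :: real assume "0 < t" "t < 1"
  have "y + ((1 - t) *\<^sub>R a + t *\<^sub>R b) *\<^sub>R x = (1 - t) *\<^sub>R (y + a *\<^sub>R x) + t *\<^sub>R (y + b *\<^sub>R x)"
    by (simp add: algebra_simps)
  also have "norm \<dots> \<le> norm ((1 - t) *\<^sub>R (y + a *\<^sub>R x)) + norm (t *\<^sub>R (y + b *\<^sub>R x))"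
    by (rule norm_triangle_ineq)
  also have "\<dots> = (1 - t) * norm (y + a *\<^sub>R x) + t * norm (y + b *\<^sub>R x)"
    using \<open>0 < t\<close> \<open>t < 1\<close> by simp
  finally show "norm (y + ((1 - t) *\<^sub>R a + t *\<^sub>R b) *\<^sub>R x) \<le> (1 - t) * norm (y + a *\<^sub>R x) + t * norm (y + b *\<^sub>R x)" .
qed simp

lemma bj_orth_scaleR_add_norm_ge:
  assumes "bj_orth u w"
  shows "\<bar>l\<bar> * norm u \<le> norm (l *\<^sub>R u + g *\<^sub>R w)"
proof (cases "l = 0")
  case False
  have "norm u \<le> norm (u + (g / l) *\<^sub>R w)" using assms unfolding bj_orth_def by blast
  then have "\<bar>l\<bar> * norm u \<le> \<bar>l\<bar> * norm (u + (g / l) *\<^sub>R w)" by (simp add: mult_left_mono)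
  also have "\<dots> = norm (l *\<^sub>R (u + (g / l) *\<^sub>R w))" by simp
  also have "l *\<^sub>R (u + (g / l) *\<^sub>R w) = l *\<^sub>R u + g *\<^sub>R w"
    using False by (simp add: scaleR_add_right)
  finally show ?thesis .
qed simp

lemma bj_orthI_local:
  assumes "0 < \<epsilon>" and local_min: "\<And>\<alpha>. \<bar>\<alpha>\<bar> < \<epsilon> \<Longrightarrow> norm u \<le> norm (u + \<alpha> *\<^sub>R w)"
  shows "bj_orth u w"
  unfolding bj_orth_def
proof
  fix \<alpha> :: real
  define \<theta> where "\<theta> = \<epsilon> / (\<epsilon> + \<bar>\<alpha>\<bar>)"
  have "0 < \<theta>" "\<theta> \<le> 1" unfolding \<theta>_def using \<open>0 < \<epsilon>\<close> by auto
  have "\<bar>\<theta> * \<alpha>\<bar> < \<epsilon>"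
    unfolding \<theta>_def using \<open>0 < \<epsilon>\<close> by (simp add: abs_mult field_simps)
  then have "norm u \<le> norm (u + (\<theta> * \<alpha>) *\<^sub>R w)" by (rule local_min)
  also have "u + (\<theta> * \<alpha>) *\<^sub>R w = \<theta> *\<^sub>R (u + \<alpha> *\<^sub>R w) + (1 - \<theta>) *\<^sub>R u"
    by (simp add: algebra_simps)
  also have "norm \<dots> \<le> norm (\<theta> *\<^sub>R (u + \<alpha> *\<^sub>R w)) + norm ((1 - \<theta>) *\<^sub>R u)"
    by (rule norm_triangle_ineq)
  also have "\<dots> = \<theta> * norm (u + \<alpha> *\<^sub>R w) + (1 - \<theta>) * norm u"
    using \<open>0 < \<theta>\<close> \<open>\<theta> \<le> 1\<close> by simp
  finally show "norm u \<le> norm (u + \<alpha> *\<^sub>R w)"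
    using \<open>0 < \<theta>\<close> by (simp add: algebra_simps)
qed

lemma bj_orth_support_direction:
  assumes "u \<noteq> 0" and support: "\<And>q. norm u + b * q \<le> norm (u + q *\<^sub>R x)"
  shows "bj_orth u (b *\<^sub>R u - norm u *\<^sub>R x)"
proof (rule bj_orthI_local[of "1 / (\<bar>b\<bar> + 1)"])
  fix \<alpha> :: real assume "\<bar>\<alpha>\<bar> < 1 / (\<bar>b\<bar> + 1)"
  then have "\<bar>\<alpha> * b\<bar> < 1" by (simp add: abs_mult field_simps)
  define c where "c = 1 + \<alpha> * b"
  define p where "p = norm u"
  have "0 < c" unfolding c_def using \<open>\<bar>\<alpha> * b\<bar> < 1\<close> by linarith
  have "u + \<alpha> *\<^sub>R (b *\<^sub>R u - p *\<^sub>R x) = c *\<^sub>R u - (\<alpha> * p) *\<^sub>R x"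
    unfolding c_def by (simp add: algebra_simps)
  also have "\<dots> = c *\<^sub>R (u + (- \<alpha> * p / c) *\<^sub>R x)"
    using \<open>0 < c\<close> by (simp add: scaleR_diff_right)
  finally have "norm (u + \<alpha> *\<^sub>R (b *\<^sub>R u - p *\<^sub>R x)) = c * norm (u + (- \<alpha> * p / c) *\<^sub>R x)"
    using \<open>0 < c\<close> by simp
  also have "\<dots> \<ge> c * (p + b * (- \<alpha> * p / c))"
    using support[of "- \<alpha> * p / c"] \<open>0 < c\<close> unfolding p_def by (intro mult_left_mono) auto
  also have "c * (p + b * (- \<alpha> * p / c)) = p"
    using \<open>0 < c\<close> unfolding c_def by (simp add: field_simps)
  finally show "norm u \<le> norm (u + \<alpha> *\<^sub>R (b *\<^sub>R u - norm u *\<^sub>R x))" unfolding p_def .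
qed simp

lemma scaleR_add_eq_0_if_not_multiple:
  fixes x z :: "'a::real_vector"
  assumes "x \<noteq> 0" and not_multiple: "\<nexists>c. z = c *\<^sub>R x" and "a *\<^sub>R x + b *\<^sub>R z = 0"
  shows "a = 0 \<and> b = 0"
proof -
  have "b = 0"
  proof (rule ccontr)
    assume "b \<noteq> 0"
    have "z = (1 / b) *\<^sub>R (a *\<^sub>R x + b *\<^sub>R z) - (a / b) *\<^sub>R x"
      using \<open>b \<noteq> 0\<close> by (simp add: algebra_simps)
    also have "\<dots> = (- a / b) *\<^sub>R x" using \<open>a *\<^sub>R x + b *\<^sub>R z = 0\<close> by simp
    finally have "\<exists>c. z = c *\<^sub>R x" ..
    with not_multiple show False by contradiction
  qed
  with assms show ?thesis by simp
qed

locale bj_orth_preserving =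
  fixes T :: "'a::real_normed_vector \<Rightarrow> 'b::real_normed_vector"
  assumes linear: "linear T"
    and preserves_bj_orth: "bj_orth x y \<Longrightarrow> bj_orth (T x) (T y)"
begin

lemma norm_image_support_bound:
  assumes "u \<noteq> 0" and support: "\<And>q. norm u + b * q \<le> norm (u + q *\<^sub>R x)"
  shows "norm (T u) * (norm u + b * q) \<le> norm (T (u + q *\<^sub>R x)) * norm u"
proof -
  define p where "p = norm u"
  define w where "w = b *\<^sub>R u - p *\<^sub>R x"
  have "0 < p" unfolding p_def using \<open>u \<noteq> 0\<close> by simp
  have "bj_orth (T u) (T w)"
    unfolding w_def p_def by (intro preserves_bj_orth bj_orth_support_direction assms)
  define l where "l = (p + b * q) / p"
  have "u + q *\<^sub>R x = l *\<^sub>R u + (- q / p) *\<^sub>R w"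
    using \<open>0 < p\<close> unfolding l_def w_def
    by (simp add: algebra_simps scaleR_add_left[symmetric] add_divide_distrib)
  then have "T (u + q *\<^sub>R x) = l *\<^sub>R T u + (- q / p) *\<^sub>R T w"
    by (simp add: linear_add[OF linear] linear_diff[OF linear] linear_scale[OF linear])
  then have "\<bar>l\<bar> * norm (T u) \<le> norm (T (u + q *\<^sub>R x))"
    using bj_orth_scaleR_add_norm_ge[OF \<open>bj_orth (T u) (T w)\<close>, of l "- q / p"] by simp
  then have "l * norm (T u) \<le> norm (T (u + q *\<^sub>R x))"
    by (meson abs_ge_self mult_right_mono norm_ge_zero order.trans)
  then have "l * norm (T u) * p \<le> norm (T (u + q *\<^sub>R x)) * p"
    using \<open>0 < p\<close> by (simp add: mult_right_mono)
  then show ?thesis using \<open>0 < p\<close> unfolding l_def p_def by (simp add: mult.commute)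
qed

lemma norm_ratio_mono_on_line:
  assumes nonzero: "\<And>q. y + q *\<^sub>R x \<noteq> 0" and "s \<le> t"
  shows "norm (T (y + s *\<^sub>R x)) / norm (y + s *\<^sub>R x)
    \<le> norm (T (y + t *\<^sub>R x)) / norm (y + t *\<^sub>R x)"
proof -
  define \<phi> where "\<phi> q = norm (y + q *\<^sub>R x)" for q
  have "\<exists>B. \<forall>q. \<phi> a + B * (q - a) \<le> \<phi> q" for a
    using convex_on_real_subgradient[OF convex_on_norm_line[of y x], of a] unfolding \<phi>_def by metis
  then obtain B where support: "\<And>a q. \<phi> a + B a * (q - a) \<le> \<phi> q" by metis
  have "norm (T (y + a *\<^sub>R x)) * (\<phi> a + B a * (q - a)) \<le> norm (T (y + q *\<^sub>R x)) * \<phi> a" for a q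
  proof -
    have "norm (y + a *\<^sub>R x) + B a * q' \<le> norm ((y + a *\<^sub>R x) + q' *\<^sub>R x)" for q'
      using support[of a "a + q'"] by (simp add: \<phi>_def algebra_simps)
    from norm_image_support_bound[OF nonzero this, of "q - a"] show ?thesis
      by (simp add: \<phi>_def algebra_simps)
  qed
  moreover have "continuous_on {s..t} \<phi>" unfolding \<phi>_def by (intro continuous_intros)
  ultimately show ?thesis
    using ratio_mono_if_support_bound[of \<phi> s t "\<lambda>q. norm (T (y + q *\<^sub>R x))" B] nonzero support \<open>s \<le> t\<close>
    unfolding \<phi>_def by simp
qed

lemma norm_ratio_const_on_line:
  assumes nonzero: "\<And>q. y + q *\<^sub>R x \<noteq> 0"
  shows "norm (T (y + q *\<^sub>R x)) / norm (y + q *\<^sub>R x) = norm (T y) / norm y"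
proof -
  have nonzero': "y + q *\<^sub>R (- x) \<noteq> 0" for q using nonzero[of "- q"] by simp
  note forward = norm_ratio_mono_on_line[OF nonzero]
    and backward = norm_ratio_mono_on_line[OF nonzero']
  show ?thesis
  proof (cases "0 \<le> q")
    case True
    with forward[of 0 q] backward[of "- q" 0] show ?thesis by simp
  next
    case False
    with forward[of q 0] backward[of 0 "- q"] show ?thesis by simp
  qed
qed

lemma norm_ratio_eq_if_independent:
  assumes independent: "\<And>a b. a *\<^sub>R x + b *\<^sub>R y = 0 \<Longrightarrow> a = 0 \<and> b = 0"
  shows "norm (T x) / norm x = norm (T y) / norm y"
proof -
  have "y + q *\<^sub>R x \<noteq> 0" for q using independent[of q 1] by (auto simp: add.commute)
  then have "norm (T (y + x)) / norm (y + x) = norm (T y) / norm y"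
    using norm_ratio_const_on_line[of y x 1] by simp
  moreover have "x + q *\<^sub>R y \<noteq> 0" for q using independent[of 1 q] by auto
  then have "norm (T (x + y)) / norm (x + y) = norm (T x) / norm x"
    using norm_ratio_const_on_line[of x y 1] by simp
  ultimately show ?thesis by (simp add: add.commute)
qed

lemma norm_image_proportional:
  obtains c where "0 \<le> c" and "\<And>z. norm (T z) = c * norm z"
proof (cases "\<exists>x0::'a. x0 \<noteq> 0")
  case False
  have "T z = 0" for z
  proof -
    from False have "z = 0" by blast
    then show ?thesis by (simp add: linear_0[OF linear])
  qed
  then show ?thesis using that[of 0] by simp
next
  case True
  then obtain x0 :: 'a where "x0 \<noteq> 0" by blast
  define c where "c = norm (T x0) / norm x0"
  have "norm (T z) = c * norm z" for z
  proof (cases "\<exists>a. z = a *\<^sub>R x0")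
    case True
    then obtain a where "z = a *\<^sub>R x0" by blast
    then show ?thesis using \<open>x0 \<noteq> 0\<close> unfolding c_def by (simp add: linear_scale[OF linear])
  next
    case False
    then have "a = 0 \<and> b = 0" if "a *\<^sub>R x0 + b *\<^sub>R z = 0" for a b
      using scaleR_add_eq_0_if_not_multiple[OF \<open>x0 \<noteq> 0\<close> _ that] by blast
    then have "c = norm (T z) / norm z" unfolding c_def by (rule norm_ratio_eq_if_independent)
    moreover have "z \<noteq> 0" using False by auto
    ultimately show ?thesis by simp
  qed
  moreover have "0 \<le> c" unfolding c_def by simp
  ultimately show ?thesis using that by blast
qed

end

theorem mainTheorem1:
  fixes T :: "'a::banach \<Rightarrow> 'a"
  assumes "linear T"
    and "\<And>x y. bj_orth x y \<Longrightarrow> bj_orth (T x) (T y)"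
  shows "\<exists>(k::real) (U::'a \<Rightarrow> 'a). linear U \<and> (\<forall>x. norm (U x) = norm x) \<and>
           (\<forall>x. T x = k *\<^sub>R U x)"
proof -
  interpret bj_orth_preserving T by (rule bj_orth_preserving.intro[OF assms])
  obtain c where "0 \<le> c" and c: "\<And>z. norm (T z) = c * norm z"
    using norm_image_proportional by blast
  show ?thesis
  proof (cases "c = 0")
    case True
    then have "T x = 0 *\<^sub>R x" for x using c[of x] by simp
    with linear_ident show ?thesis by blast
  next
    case False
    have "linear (\<lambda>x. (1 / c) *\<^sub>R T x)" using linear by (rule linear_compose_scale_right)
    moreover have "norm ((1 / c) *\<^sub>R T x) = norm x" for x using c[of x] \<open>0 \<le> c\<close> False by simp
    moreover have "T x = c *\<^sub>R ((1 / c) *\<^sub>R T x)" for x using False by simp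
    ultimately show ?thesis by blast
  qed
qed

end
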